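(* Let $g:E^2\times E^2\to\mathbb R$ and let integers $i,\delta_1,\delta_2\ge0$ satisfy $i\le\delta_1$ and $\delta_2\ge\delta_1-i$. Let $(Z_n)_{n\ge0}$ be a stationary Markov chain with transition matrix $Q$, independent of $(X_n,Y_n)_{n\ge0}$, and write $\mathcal X=(X_n)_{n\ge0}$, $\mathcal Y=(Y_n)_{n\ge0}$, $\mathcal Z=(Z_n)_{n\ge0}$ and, for $T\ge1$, $\mathcal Y^T=(Y_{n+T})_{n\ge0}$. Then $$\mathbb E(\mathcal L^g(\mathcal X,\mathcal Y,\mathcal Z))=1,$$ and there is a constant $\rho>0$, not depending on $i,\delta_1,\delta_2,T$, such that $\mathbb E(\mathcal L^g(\mathcal X,\mathcal Y,\mathcal Y^T))\le\rho$ whenever $T\ge1$ and $i+T\ge\delta_1+1$.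
   Context: Let $E$ be a finite set and $P,Q$ irreducible aperiodic stochastic $E\times E$ matrices. Under $\mathbb P$, $(X_n)_{n\ge0}$ and $(Y_n)_{n\ge0}$ are independent stationary Markov chains with transition matrices $P$ and $Q$. For $g:E^2\times E^2\to\mathbb R$ let $\Phi_0(g)_{(x,y),(x',y')}=\exp(g(x,y,x',y'))P_{x,x'}Q_{y,y'}$ with spectral radius $\varphi_0(g)$ and positive right eigenvector $r^g_0$, and let $\Phi_1(g)_{(x,y,z),(x',y',z')}=\exp(g(x,y,x',y')+g(x,z,x',z'))P_{x,x'}Q_{y,y'}Q_{z,z'}$ with spectral radius $\varphi_1(g)$ and positive right eigenvector $r^g_1$. For sequences $(x_k)_{k\ge0},(y_k)_{k\ge0},(z_k)_{k\ge0}$ in $E$ put $\sigma_1=\sum_{k=1}^{i}g(x_{k-1},y_{k-1},x_k,y_k)$, $\sigma_2=\sum_{k=i+1}^{\delta_1}[g(x_{k-1},y_{k-1},x_k,y_k)+g(x_{k-1},z_{k-1},x_k,z_k)]$, $\sigma_3=\sum_{k=\delta_1+1}^{i+\delta_2}g(x_{k-1},z_{k-1},x_k,z_k)$, and $$\mathcal L^g=\frac{r^g_0(x_i,y_i)e^{\sigma_1}}{r^g_0(x_0,y_0)\varphi_0(g)^i}\cdot\frac{r^g_1(x_{\delta_1},y_{\delta_1},z_{\delta_1})e^{\sigma_2}}{r^g_1(x_i,y_i,z_i)\varphi_1(g)^{\delta_1-i}}\cdot\frac{r^g_0(x_{i+\delta_2},z_{i+\delta_2})e^{\sigma_3}}{r^g_0(x_{\delta_1},z_{\delta_1})\varphi_0(g)^{i+\delta_2-\delta_1}}.$$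 *)

theory Defs
  imports "HOL-Analysis.Analysis"
begin

fun mpow :: "('i::finite \<Rightarrow> 'i \<Rightarrow> real) \<Rightarrow> nat \<Rightarrow> 'i \<Rightarrow> 'i \<Rightarrow> real" where
  "mpow M 0 = (\<lambda>a b. if a = b then 1 else 0)"
| "mpow M (Suc n) = (\<lambda>a c. \<Sum>b\<in>UNIV. mpow M n a b * M b c)"

definition stochastic :: "('i::finite \<Rightarrow> 'i \<Rightarrow> real) \<Rightarrow> bool" where
  "stochastic M \<longleftrightarrow> (\<forall>a b. M a b \<ge> 0) \<and> (\<forall>a. (\<Sum>b\<in>UNIV. M a b) = 1)"

definition irreducible_mat :: "('i::finite \<Rightarrow> 'i \<Rightarrow> real) \<Rightarrow> bool" where
  "irreducible_mat M \<longleftrightarrow> (\<forall>a b. \<exists>n>0. mpow M n a b > 0)"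

definition aperiodic_mat :: "('i::finite \<Rightarrow> 'i \<Rightarrow> real) \<Rightarrow> bool" where
  "aperiodic_mat M \<longleftrightarrow> (\<forall>a. Gcd {n::nat. n > 0 \<and> mpow M n a a > 0} = 1)"

definition stationary_dist :: "('i::finite \<Rightarrow> real) \<Rightarrow> ('i \<Rightarrow> 'i \<Rightarrow> real) \<Rightarrow> bool" where
  "stationary_dist \<pi> M \<longleftrightarrow> (\<forall>a. \<pi> a \<ge> 0) \<and> (\<Sum>a\<in>UNIV. \<pi> a) = 1
     \<and> (\<forall>b. (\<Sum>a\<in>UNIV. \<pi> a * M a b) = \<pi> b)"

definition mat_eigenvalue :: "('i::finite \<Rightarrow> 'i \<Rightarrow> real) \<Rightarrow> complex \<Rightarrow> bool" where
  "mat_eigenvalue M l \<longleftrightarrow>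
     (\<exists>v :: 'i \<Rightarrow> complex. v \<noteq> (\<lambda>_. 0) \<and> (\<forall>a. (\<Sum>b\<in>UNIV. complex_of_real (M a b) * v b) = l * v a))"

definition spec_radius :: "('i::finite \<Rightarrow> 'i \<Rightarrow> real) \<Rightarrow> real" where
  "spec_radius M = Max {cmod l | l. mat_eigenvalue M l}"

definition pos_right_eigvec :: "('i::finite \<Rightarrow> 'i \<Rightarrow> real) \<Rightarrow> ('i \<Rightarrow> real) \<Rightarrow> bool" where
  "pos_right_eigvec M r \<longleftrightarrow> (\<forall>a. r a > 0) \<and>
     (\<forall>a. (\<Sum>b\<in>UNIV. M a b * r b) = spec_radius M * r a)"

type_synonym 'e pot = "'e \<Rightarrow> 'e \<Rightarrow> 'e \<Rightarrow> 'e \<Rightarrow> real"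
  \<comment> \<open>g x y x' y' stands for g(x,y,x',y')\<close>

definition Phi0 :: "('e::finite \<Rightarrow> 'e \<Rightarrow> real) \<Rightarrow> ('e \<Rightarrow> 'e \<Rightarrow> real) \<Rightarrow> 'e pot
                    \<Rightarrow> ('e \<times> 'e) \<Rightarrow> ('e \<times> 'e) \<Rightarrow> real" where
  "Phi0 P Q g = (\<lambda>(x, y) (x', y'). exp (g x y x' y') * P x x' * Q y y')"

definition Phi1 :: "('e::finite \<Rightarrow> 'e \<Rightarrow> real) \<Rightarrow> ('e \<Rightarrow> 'e \<Rightarrow> real) \<Rightarrow> 'e pot
                    \<Rightarrow> ('e \<times> 'e \<times> 'e) \<Rightarrow> ('e \<times> 'e \<times> 'e) \<Rightarrow> real" where
  "Phi1 P Q g = (\<lambda>(x, y, z) (x', y', z').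
      exp (g x y x' y' + g x z x' z') * P x x' * Q y y' * Q z z')"

definition Lg :: "('e::finite \<Rightarrow> 'e \<Rightarrow> real) \<Rightarrow> ('e \<Rightarrow> 'e \<Rightarrow> real) \<Rightarrow> 'e pot
     \<Rightarrow> ('e \<times> 'e \<Rightarrow> real) \<Rightarrow> ('e \<times> 'e \<times> 'e \<Rightarrow> real)
     \<Rightarrow> nat \<Rightarrow> nat \<Rightarrow> nat \<Rightarrow> (nat \<Rightarrow> 'e) \<Rightarrow> (nat \<Rightarrow> 'e) \<Rightarrow> (nat \<Rightarrow> 'e) \<Rightarrow> real" where
  "Lg P Q g r0 r1 i \<delta>1 \<delta>2 x y z =
    (let \<phi>0 = spec_radius (Phi0 P Q g);
         \<phi>1 = spec_radius (Phi1 P Q g);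
         \<sigma>1 = (\<Sum>k\<in>{1..i}. g (x (k-1)) (y (k-1)) (x k) (y k));
         \<sigma>2 = (\<Sum>k\<in>{i+1..\<delta>1}. g (x (k-1)) (y (k-1)) (x k) (y k) + g (x (k-1)) (z (k-1)) (x k) (z k));
         \<sigma>3 = (\<Sum>k\<in>{\<delta>1+1..i+\<delta>2}. g (x (k-1)) (z (k-1)) (x k) (z k))
     in (r0 (x i, y i) * exp \<sigma>1 / (r0 (x 0, y 0) * \<phi>0 ^ i))
      * (r1 (x \<delta>1, y \<delta>1, z \<delta>1) * exp \<sigma>2 / (r1 (x i, y i, z i) * \<phi>1 ^ (\<delta>1 - i)))
      * (r0 (x (i+\<delta>2), z (i+\<delta>2)) * exp \<sigma>3 / (r0 (x \<delta>1, z \<delta>1) * \<phi>0 ^ (i+\<delta>2-\<delta>1))))"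

text \<open>Paths of length n+1 (times 0..n), and their probability under the Markov chain with
  initial law \<pi> and transition matrix M.\<close>
definition paths :: "nat \<Rightarrow> 'e list set" where
  "paths n = {xs. length xs = Suc n}"

definition path_prob :: "('e \<Rightarrow> real) \<Rightarrow> ('e \<Rightarrow> 'e \<Rightarrow> real) \<Rightarrow> nat \<Rightarrow> 'e list \<Rightarrow> real" where
  "path_prob \<pi> M n xs = \<pi> (xs ! 0) * (\<Prod>k<n. M (xs ! k) (xs ! Suc k))"

text \<open>Expectation of F(X,Y,Z) for independent Markov chains X ~ (\<pi>P,P), Y,Z ~ (\<pi>Q,Q),
  where F depends only on the coordinates 0..n of its arguments.\<close>
definition E3 :: "('e::finite \<Rightarrow> real) \<Rightarrow> ('e \<Rightarrow> 'e \<Rightarrow> real) \<Rightarrow> ('e \<Rightarrow> real) \<Rightarrow> ('e \<Rightarrow> 'e \<Rightarrow> real)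
     \<Rightarrow> nat \<Rightarrow> ((nat \<Rightarrow> 'e) \<Rightarrow> (nat \<Rightarrow> 'e) \<Rightarrow> (nat \<Rightarrow> 'e) \<Rightarrow> real) \<Rightarrow> real" where
  "E3 \<pi>P P \<pi>Q Q n F = (\<Sum>xs\<in>paths n. \<Sum>ys\<in>paths n. \<Sum>zs\<in>paths n.
      path_prob \<pi>P P n xs * path_prob \<pi>Q Q n ys * path_prob \<pi>Q Q n zs
      * F (\<lambda>k. xs ! k) (\<lambda>k. ys ! k) (\<lambda>k. zs ! k))"

definition E2 :: "('e::finite \<Rightarrow> real) \<Rightarrow> ('e \<Rightarrow> 'e \<Rightarrow> real) \<Rightarrow> ('e \<Rightarrow> real) \<Rightarrow> ('e \<Rightarrow> 'e \<Rightarrow> real)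
     \<Rightarrow> nat \<Rightarrow> ((nat \<Rightarrow> 'e) \<Rightarrow> (nat \<Rightarrow> 'e) \<Rightarrow> real) \<Rightarrow> real" where
  "E2 \<pi>P P \<pi>Q Q n F = (\<Sum>xs\<in>paths n. \<Sum>ys\<in>paths n.
      path_prob \<pi>P P n xs * path_prob \<pi>Q Q n ys * F (\<lambda>k. xs ! k) (\<lambda>k. ys ! k))"

end

theory Submission
  imports Defs
begin

text \<open>Along the joint chain \<open>(X\<^sub>k, Y\<^sub>k, Z\<^sub>k)\<close>, \<open>\<L>\<^sup>g\<close> is a product of one-step
  factors \<open>exp (g(s, s')) r(s') / (r(s) \<phi>)\<close>, where \<open>(r, \<phi>)\<close> is the right Perron pair of
  \<open>\<Phi>\<^sub>0\<close> on \<open>(X, Y)\<close> up to time \<open>i\<close>, of \<open>\<Phi>\<^sub>1\<close> on \<open>(X, Y, Z)\<close> up to time \<open>\<delta>\<^sub>1\<close> and of \<open>\<Phi>\<^sub>0\<close>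
  on \<open>(X, Z)\<close> afterwards. The eigenvector equation says exactly that each factor has
  conditional mean one given the past, so the expectation of the product is one.

  When \<open>Z = \<Y>\<^sup>T\<close> with \<open>i + T > \<delta>\<^sub>1\<close>, the functional reads \<open>Y\<close> only up to time \<open>\<delta>\<^sub>1\<close> and
  \<open>\<Y>\<^sup>T\<close> only from time \<open>i + T\<close> on. Cutting the path of \<open>Y\<close> there, the probability of the
  whole path is at most \<open>1 / min \<pi>\<^sub>Q\<close> times the product of the probabilities of two
  independent stationary pieces, which reduces the second claim to the first one with
  \<open>\<rho> = 1 / min \<pi>\<^sub>Q\<close>.\<close>

lemma sum_paths_0: "(\<Sum>xs\<in>paths 0. f xs) = (\<Sum>a\<in>(UNIV :: 'e::finite set). f [a])"
  by (rule sum.reindex_bij_witness[where i = "\<lambda>a. [a]" and j = hd]) (auto simp: paths_def length_Suc_conv)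

lemma sum_paths_snoc:
  "(\<Sum>xs\<in>paths (Suc n). f xs) = (\<Sum>xs\<in>paths n. \<Sum>a\<in>(UNIV :: 'e::finite set). f (xs @ [a]))"
proof -
  have "(\<Sum>xs\<in>paths (Suc n). f xs) = (\<Sum>(xs, a)\<in>paths n \<times> UNIV. f (xs @ [a]))"
    by (rule sum.reindex_bij_witness[where i = "\<lambda>(xs, a). xs @ [a]" and j = "\<lambda>ys. (butlast ys, last ys)"])
      (auto simp: paths_def length_Suc_conv_rev butlast_append)
  then show ?thesis
    by (simp add: sum.cartesian_product)
qed

lemma sum_paths_Cons:
  "(\<Sum>xs\<in>paths (Suc n). f xs) = (\<Sum>a\<in>(UNIV :: 'e::finite set). \<Sum>xs\<in>paths n. f (a # xs))"
proof -
  have "(\<Sum>xs\<in>paths (Suc n). f xs) = (\<Sum>(a, xs)\<in>UNIV \<times> paths n. f (a # xs))"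
    by (rule sum.reindex_bij_witness[where i = "\<lambda>(a, xs). a # xs" and j = "\<lambda>ys. (hd ys, tl ys)"])
      (auto simp: paths_def length_Suc_conv)
  then show ?thesis
    by (simp add: sum.cartesian_product)
qed

lemma sum_paths_append:
  "(\<Sum>xs\<in>paths (m + Suc n). f xs) = (\<Sum>us\<in>paths m. \<Sum>ws\<in>paths n. f (us @ (ws :: 'e::finite list)))"
proof -
  have "(\<Sum>xs\<in>paths (m + Suc n). f xs) = (\<Sum>(us, ws)\<in>paths m \<times> paths n. f (us @ ws))"
    by (rule sum.reindex_bij_witness[where i = "\<lambda>(us, ws). us @ ws"
          and j = "\<lambda>xs. (take (Suc m) xs, drop (Suc m) xs)"])
      (auto simp: paths_def)
  then show ?thesis
    by (simp add: sum.cartesian_product)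
qed

lemma sum_paths_zip:
  "(\<Sum>xs\<in>paths n. \<Sum>ys\<in>paths n. f xs ys)
     = (\<Sum>ws\<in>paths n. f (map fst ws) (map snd (ws :: ('a::finite \<times> 'b::finite) list)))"
proof -
  have "(\<Sum>ws\<in>paths n. f (map fst ws) (map snd ws)) = (\<Sum>(xs, ys)\<in>paths n \<times> paths n. f xs ys)"
    by (rule sum.reindex_bij_witness[where i = "\<lambda>(xs, ys). zip xs ys"
          and j = "\<lambda>ws. (map fst ws, map snd ws)"])
      (auto simp: paths_def zip_map_fst_snd)
  then show ?thesis
    by (simp add: sum.cartesian_product)
qed

lemma path_prob_nonneg:
  "stochastic M \<Longrightarrow> (\<And>a. \<pi> a \<ge> 0) \<Longrightarrow> path_prob \<pi> M n xs \<ge> 0"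
  by (auto simp: path_prob_def stochastic_def intro!: prod_nonneg mult_nonneg_nonneg)

lemma path_prob_snoc:
  "length xs = Suc n \<Longrightarrow> path_prob \<pi> M (Suc n) (xs @ [a]) = path_prob \<pi> M n xs * M (xs ! n) a"
  by (simp add: path_prob_def nth_append)

lemma path_prob_append:
  assumes "length us = Suc m" "length ws = Suc n"
  shows "path_prob \<pi> M (m + Suc n) (us @ ws)
           = path_prob \<pi> M m us * M (us ! m) (ws ! 0) * (\<Prod>k<n. M (ws ! k) (ws ! Suc k))"
proof -
  let ?t = "\<lambda>k. M ((us @ ws) ! k) ((us @ ws) ! Suc k)"
  have "(\<Prod>k<m + Suc n. ?t k) = (\<Prod>k<Suc m. ?t k) * (\<Prod>k\<in>{Suc m..<Suc m + n}. ?t k)"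
    using prod.atLeastLessThan_concat[of 0 "Suc m" "Suc m + n" ?t] by (simp add: atLeast0LessThan)
  also have "(\<Prod>k\<in>{Suc m..<Suc m + n}. ?t k) = (\<Prod>k<n. ?t (Suc m + k))"
    using prod.shift_bounds_nat_ivl[of ?t 0 "Suc m" n] by (simp add: atLeast0LessThan add.commute)
  finally have "(\<Prod>k<m + Suc n. ?t k) = (\<Prod>k<m. ?t k) * ?t m * (\<Prod>k<n. ?t (Suc m + k))"
    by simp
  also have "\<dots> = (\<Prod>k<m. M (us ! k) (us ! Suc k)) * M (us ! m) (ws ! 0) * (\<Prod>k<n. M (ws ! k) (ws ! Suc k))"
    using assms by (simp add: nth_append)
  finally show ?thesis
    using assms by (simp add: path_prob_def nth_append mult.assoc)
qed

lemma sum_path_prob_Cons: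
  assumes "stationary_dist \<pi> M"
  shows "(\<Sum>a\<in>UNIV. path_prob \<pi> M (Suc n) (a # xs)) = path_prob \<pi> M n xs"
proof -
  have "(\<Sum>a\<in>UNIV. path_prob \<pi> M (Suc n) (a # xs))
          = (\<Sum>a\<in>UNIV. \<pi> a * M a (xs ! 0)) * (\<Prod>k<n. M (xs ! k) (xs ! Suc k))"
    unfolding path_prob_def prod.lessThan_Suc_shift by (simp add: sum_distrib_right mult.assoc)
  then show ?thesis
    using assms by (simp add: stationary_dist_def path_prob_def)
qed

lemma stochastic_le_1: "stochastic M \<Longrightarrow> M a b \<le> 1"
  unfolding stochastic_def by (metis member_le_sum finite UNIV_I)

lemma path_prob_append_le:
  assumes "stochastic M" "\<And>a. \<pi> a \<ge> 0" "length us = Suc m" "length ws = Suc n"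
  shows "\<pi> (ws ! 0) * path_prob \<pi> M (m + Suc n) (us @ ws) \<le> path_prob \<pi> M m us * path_prob \<pi> M n ws"
proof -
  have "\<pi> (ws ! 0) * path_prob \<pi> M (m + Suc n) (us @ ws)
      = M (us ! m) (ws ! 0) * (path_prob \<pi> M m us * path_prob \<pi> M n ws)"
    by (simp only: path_prob_append[OF assms(3,4)]) (simp add: path_prob_def mult_ac)
  also have "\<dots> \<le> path_prob \<pi> M m us * path_prob \<pi> M n ws"
    using assms(1,2) by (intro mult_left_le_one_le mult_nonneg_nonneg path_prob_nonneg)
      (auto simp: stochastic_def stochastic_le_1)
  finally show ?thesis .
qed

lemma sum_eq_1_obtains_pos:
  assumes "sum f UNIV = (1 :: real)"
  obtains b where "f b > 0"
proof (rule ccontr)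
  assume "\<not> thesis"
  then have "f b \<le> 0" for b
    using that[of b] by linarith
  then have "sum f UNIV \<le> 0"
    by (simp add: sum_nonpos)
  with assms show False
    by simp
qed

lemma mpow_nonneg: "stochastic M \<Longrightarrow> mpow M n a b \<ge> 0"
  by (induction n arbitrary: b) (auto simp: stochastic_def intro!: sum_nonneg mult_nonneg_nonneg)

lemma stationary_dist_mpow:
  assumes "stationary_dist \<pi> M"
  shows "(\<Sum>a\<in>UNIV. \<pi> a * mpow M n a b) = \<pi> b"
proof (induction n arbitrary: b)
  case (Suc n)
  have "(\<Sum>a\<in>UNIV. \<pi> a * mpow M (Suc n) a b) = (\<Sum>c\<in>UNIV. (\<Sum>a\<in>UNIV. \<pi> a * mpow M n a c) * M c b)"
    unfolding mpow.simps sum_distrib_left sum_distrib_right mult.assoc by (rule sum.swap)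
  also have "\<dots> = \<pi> b"
    using assms by (simp add: Suc.IH stationary_dist_def)
  finally show ?case .
qed (simp add: if_distrib cong: if_cong)

lemma stationary_dist_pos:
  assumes "stationary_dist \<pi> M" "irreducible_mat M" "stochastic M"
  shows "\<pi> b > 0"
proof -
  have \<pi>_nonneg: "\<pi> a \<ge> 0" for a
    using assms(1) by (simp add: stationary_dist_def)
  obtain a where a: "\<pi> a > 0"
    using assms(1) sum_eq_1_obtains_pos unfolding stationary_dist_def by blast
  obtain n where "mpow M n a b > 0"
    using assms(2) by (auto simp: irreducible_mat_def)
  with a have "0 < \<pi> a * mpow M n a b"
    by simp
  also have "\<dots> \<le> (\<Sum>a\<in>UNIV. \<pi> a * mpow M n a b)"
    using assms(3) \<pi>_nonneg by (intro member_le_sum) (auto intro: mult_nonneg_nonneg mpow_nonneg)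
  also have "\<dots> = \<pi> b"
    using assms(1) by (rule stationary_dist_mpow)
  finally show ?thesis .
qed

section \<open>Expectations of path functionals\<close>

text \<open>Beyond time \<open>n\<close> the argument \<open>\<lambda>k. xs ! k\<close> of \<open>F\<close> takes unspecified values, which
  is why the lemmas below that change the horizon ask \<open>F\<close> to depend only on a time window.\<close>

definition path_expect ::
    "('s::finite \<Rightarrow> real) \<Rightarrow> ('s \<Rightarrow> 's \<Rightarrow> real) \<Rightarrow> nat \<Rightarrow> ((nat \<Rightarrow> 's) \<Rightarrow> real) \<Rightarrow> real"
  where "path_expect \<pi> M n F = (\<Sum>xs\<in>paths n. path_prob \<pi> M n xs * F (\<lambda>k. xs ! k))"

lemma E3_eq_path_expect:
  "E3 \<pi>P P \<pi>Q Q n F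
     = path_expect \<pi>P P n (\<lambda>x. path_expect \<pi>Q Q n (\<lambda>y. path_expect \<pi>Q Q n (\<lambda>z. F x y z)))"
  by (simp add: E3_def path_expect_def sum_distrib_left mult_ac)

lemma E2_eq_path_expect:
  "E2 \<pi>P P \<pi>Q Q n F = path_expect \<pi>P P n (\<lambda>x. path_expect \<pi>Q Q n (\<lambda>y. F x y))"
  by (simp add: E2_def path_expect_def sum_distrib_left mult_ac)

lemma path_expect_mono:
  "stochastic M \<Longrightarrow> (\<And>a. \<pi> a \<ge> 0) \<Longrightarrow> (\<And>f. F f \<le> G f)
     \<Longrightarrow> path_expect \<pi> M n F \<le> path_expect \<pi> M n G"
  unfolding path_expect_def by (intro sum_mono mult_left_mono path_prob_nonneg)

lemma path_expect_divide: "path_expect \<pi> M n (\<lambda>f. F f / c) = path_expect \<pi> M n F / c"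
  by (simp add: path_expect_def sum_divide_distrib)

lemma path_expect_Suc:
  "path_expect \<pi> M (Suc n) F
     = (\<Sum>xs\<in>paths n. \<Sum>a\<in>UNIV. path_prob \<pi> M n xs * M (xs ! n) a * F (\<lambda>k. (xs @ [a]) ! k))"
  unfolding path_expect_def sum_paths_snoc
  by (intro sum.cong refl) (simp add: paths_def path_prob_snoc)

lemma path_expect_restrict:
  assumes "stochastic M" "m \<le> n"
    and F: "\<And>f f'. (\<And>k. k \<le> m \<Longrightarrow> f k = f' k) \<Longrightarrow> F f = F f'"
  shows "path_expect \<pi> M n F = path_expect \<pi> M m F"
  using \<open>m \<le> n\<close>
proof (induction n rule: dec_induct)
  case (step n)
  have "F (\<lambda>k. (xs @ [a]) ! k) = F (\<lambda>k. xs ! k)" if "xs \<in> paths n" for xs a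
    by (rule F) (use that step.hyps in \<open>simp add: paths_def nth_append\<close>)
  then have "path_expect \<pi> M (Suc n) F
      = (\<Sum>xs\<in>paths n. path_prob \<pi> M n xs * F (\<lambda>k. xs ! k) * (\<Sum>a\<in>UNIV. M (xs ! n) a))"
    by (simp add: path_expect_Suc sum_distrib_left mult_ac)
  also have "\<dots> = path_expect \<pi> M n F"
    using assms(1) by (simp add: stochastic_def path_expect_def)
  finally show ?case
    using step.IH by simp
qed simp

lemma path_expect_shift:
  assumes "stationary_dist \<pi> M"
  shows "path_expect \<pi> M (s + n) (\<lambda>f. F (\<lambda>k. f (s + k))) = path_expect \<pi> M n F"
proof (induction s)
  case (Suc s)
  have "path_expect \<pi> M (Suc s + n) (\<lambda>f. F (\<lambda>k. f (Suc s + k)))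
      = (\<Sum>xs\<in>paths (s + n). (\<Sum>a\<in>UNIV. path_prob \<pi> M (Suc (s + n)) (a # xs)) * F (\<lambda>k. xs ! (s + k)))"
    unfolding path_expect_def add_Suc sum_paths_Cons sum_distrib_right nth_Cons_Suc
    by (rule sum.swap)
  also have "\<dots> = path_expect \<pi> M (s + n) (\<lambda>f. F (\<lambda>k. f (s + k)))"
    by (simp add: sum_path_prob_Cons[OF assms] path_expect_def)
  finally show ?case
    using Suc.IH by simp
qed simp

lemma path_expect_split_le:
  assumes "stochastic M" "c > 0" "\<And>a. c \<le> \<pi> a" "\<And>f. F f \<ge> 0"
  shows "path_expect \<pi> M (m + Suc n) F
           \<le> path_expect \<pi> M m (\<lambda>u. path_expect \<pi> M n (\<lambda>w.
                F (\<lambda>k. if k \<le> m then u k else w (k - Suc m)))) / c"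
proof -
  have \<pi>_nonneg: "\<pi> a \<ge> 0" for a
    using assms(2) assms(3)[of a] by simp
  have prob_le: "path_prob \<pi> M (m + Suc n) (us @ ws) \<le> path_prob \<pi> M m us * path_prob \<pi> M n ws / c"
    if "us \<in> paths m" "ws \<in> paths n" for us ws
  proof -
    have "c * path_prob \<pi> M (m + Suc n) (us @ ws) \<le> \<pi> (ws ! 0) * path_prob \<pi> M (m + Suc n) (us @ ws)"
      using assms(1,3) \<pi>_nonneg by (intro mult_right_mono path_prob_nonneg)
    also have "\<dots> \<le> path_prob \<pi> M m us * path_prob \<pi> M n ws"
      using that assms(1) \<pi>_nonneg by (intro path_prob_append_le) (auto simp: paths_def)
    finally show ?thesis
      using assms(2) by (simp add: pos_le_divide_eq mult.commute)
  qed
  have "path_expect \<pi> M (m + Suc n) F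
      = (\<Sum>us\<in>paths m. \<Sum>ws\<in>paths n. path_prob \<pi> M (m + Suc n) (us @ ws)
           * F (\<lambda>k. if k \<le> m then us ! k else ws ! (k - Suc m)))"
  proof -
    have "(\<lambda>k. (us @ ws) ! k) = (\<lambda>k. if k \<le> m then us ! k else ws ! (k - Suc m))"
      if "us \<in> paths m" for us ws :: "'a list"
      using that by (auto simp: paths_def nth_append)
    then show ?thesis
      unfolding path_expect_def sum_paths_append by (intro sum.cong refl) simp
  qed
  also have "\<dots> \<le> (\<Sum>us\<in>paths m. \<Sum>ws\<in>paths n. path_prob \<pi> M m us * path_prob \<pi> M n ws / c
           * F (\<lambda>k. if k \<le> m then us ! k else ws ! (k - Suc m)))"
    using assms(4) by (intro sum_mono mult_right_mono prob_le)
  also have "\<dots> = path_expect \<pi> M m (\<lambda>u. path_expect \<pi> M n (\<lambda>w.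
                F (\<lambda>k. if k \<le> m then u k else w (k - Suc m)))) / c"
    by (simp add: path_expect_def sum_distrib_left sum_divide_distrib mult_ac)
  finally show ?thesis .
qed

definition pair_dist :: "('a \<Rightarrow> real) \<Rightarrow> ('b \<Rightarrow> real) \<Rightarrow> 'a \<times> 'b \<Rightarrow> real"
  where "pair_dist \<pi>1 \<pi>2 = (\<lambda>(a, b). \<pi>1 a * \<pi>2 b)"

definition pair_kernel :: "('a \<Rightarrow> 'a \<Rightarrow> real) \<Rightarrow> ('b \<Rightarrow> 'b \<Rightarrow> real) \<Rightarrow> 'a \<times> 'b \<Rightarrow> 'a \<times> 'b \<Rightarrow> real"
  where "pair_kernel M1 M2 = (\<lambda>(a, b) (a', b'). M1 a a' * M2 b b')"

lemma sum_UNIV_prod: "(\<Sum>p\<in>(UNIV :: ('a::finite \<times> 'b::finite) set). f p) = (\<Sum>a\<in>UNIV. \<Sum>b\<in>UNIV. f (a, b))"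
  by (simp add: sum.cartesian_product flip: UNIV_Times_UNIV)

lemma sum_pair_dist:
  fixes \<pi>1 :: "'a::finite \<Rightarrow> real" and \<pi>2 :: "'b::finite \<Rightarrow> real"
  shows "sum (pair_dist \<pi>1 \<pi>2) UNIV = sum \<pi>1 UNIV * sum \<pi>2 UNIV"
  by (simp add: sum_UNIV_prod pair_dist_def sum_product)

lemma path_prob_zip:
  assumes "length xs = Suc n" "length ys = Suc n"
  shows "path_prob (pair_dist \<pi>1 \<pi>2) (pair_kernel M1 M2) n (zip xs ys)
           = path_prob \<pi>1 M1 n xs * path_prob \<pi>2 M2 n ys"
  using assms by (simp add: path_prob_def pair_dist_def pair_kernel_def prod.distrib)

lemma path_expect_pair:
  fixes F :: "(nat \<Rightarrow> 'a::finite) \<Rightarrow> (nat \<Rightarrow> 'b::finite) \<Rightarrow> real"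
  assumes F: "\<And>x x' y y'. (\<And>k. k \<le> n \<Longrightarrow> x k = x' k) \<Longrightarrow> (\<And>k. k \<le> n \<Longrightarrow> y k = y' k)
                \<Longrightarrow> F x y = F x' y'"
  shows "path_expect \<pi>1 M1 n (\<lambda>x. path_expect \<pi>2 M2 n (\<lambda>y. F x y))
           = path_expect (pair_dist \<pi>1 \<pi>2) (pair_kernel M1 M2) n (\<lambda>w. F (fst \<circ> w) (snd \<circ> w))"
proof -
  have "path_prob \<pi>1 M1 n (map fst ws) * path_prob \<pi>2 M2 n (map snd ws)
          * F (\<lambda>k. map fst ws ! k) (\<lambda>k. map snd ws ! k)
      = path_prob (pair_dist \<pi>1 \<pi>2) (pair_kernel M1 M2) n ws
          * F (fst \<circ> (\<lambda>k. ws ! k)) (snd \<circ> (\<lambda>k. ws ! k))"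
    if "ws \<in> paths n" for ws
  proof -
    have "F (\<lambda>k. map fst ws ! k) (\<lambda>k. map snd ws ! k)
        = F (fst \<circ> (\<lambda>k. ws ! k)) (snd \<circ> (\<lambda>k. ws ! k))"
      by (rule F) (use that in \<open>auto simp: paths_def\<close>)
    moreover have "path_prob \<pi>1 M1 n (map fst ws) * path_prob \<pi>2 M2 n (map snd ws)
        = path_prob (pair_dist \<pi>1 \<pi>2) (pair_kernel M1 M2) n ws"
      using that path_prob_zip[of "map fst ws" n "map snd ws"] by (simp add: paths_def zip_map_fst_snd)
    ultimately show ?thesis
      by simp
  qed
  then show ?thesis
    unfolding path_expect_def sum_distrib_left mult.assoc[symmetric] sum_paths_zip
    by (intro sum.cong refl)
qed

lemma path_expect_prod_unit_mean:
  fixes M :: "'s::finite \<Rightarrow> 's \<Rightarrow> real"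
  assumes "\<And>k a. k < n \<Longrightarrow> (\<Sum>b\<in>UNIV. M a b * h k a b) = 1"
  shows "path_expect \<pi> M n (\<lambda>s. \<Prod>k<n. h k (s k) (s (Suc k))) = sum \<pi> UNIV"
  using assms
proof (induction n)
  case 0
  then show ?case
    by (simp add: path_expect_def path_prob_def sum_paths_0)
next
  case (Suc n)
  have "path_expect \<pi> M (Suc n) (\<lambda>s. \<Prod>k<Suc n. h k (s k) (s (Suc k)))
      = (\<Sum>xs\<in>paths n. path_prob \<pi> M n xs * (\<Prod>k<n. h k (xs ! k) (xs ! Suc k))
           * (\<Sum>a\<in>UNIV. M (xs ! n) a * h n (xs ! n) a))"
    unfolding path_expect_Suc sum_distrib_left
    by (intro sum.cong refl) (simp add: paths_def nth_append mult_ac)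
  also have "\<dots> = path_expect \<pi> M n (\<lambda>s. \<Prod>k<n. h k (s k) (s (Suc k)))"
    using Suc.prems by (simp add: path_expect_def)
  finally show ?case
    using Suc by simp
qed

section \<open>Tilting by a positive eigenvector\<close>

definition tilt_factor :: "('s \<Rightarrow> 's \<Rightarrow> real) \<Rightarrow> ('s \<Rightarrow> real) \<Rightarrow> real \<Rightarrow> 's \<Rightarrow> 's \<Rightarrow> real"
  where "tilt_factor W r \<phi> a b = exp (W a b) * r b / (r a * \<phi>)"

lemma prod_tilt_factor:
  assumes "m \<le> n" "\<And>k. r (s k) \<noteq> 0"
  shows "(\<Prod>k\<in>{m..<n}. tilt_factor W r \<phi> (s k) (s (Suc k)))
           = r (s n) * exp (\<Sum>k\<in>{m+1..n}. W (s (k - 1)) (s k)) / (r (s m) * \<phi> ^ (n - m))"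
  using assms(1)
proof (induction n rule: dec_induct)
  case (step n)
  have "{m+1..Suc n} = insert (Suc n) {m+1..n}" and "Suc n - m = Suc (n - m)"
    using step.hyps by auto
  with step.hyps step.IH assms(2)[of n] show ?case
    by (simp add: tilt_factor_def exp_add field_simps)
qed (simp add: assms(2))

lemma tilt_factor_normalized:
  assumes "pos_right_eigvec M r" "spec_radius M \<noteq> 0" "\<And>a b. M a b = exp (W a b) * K a b"
  shows "(\<Sum>b\<in>UNIV. K a b * tilt_factor W r (spec_radius M) a b) = 1"
proof -
  have "(\<Sum>b\<in>UNIV. K a b * tilt_factor W r (spec_radius M) a b) = (\<Sum>b\<in>UNIV. M a b * r b) / (r a * spec_radius M)"
    by (simp add: tilt_factor_def assms(3) sum_divide_distrib mult_ac)
  also have "\<dots> = 1"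
    using assms(1,2) by (simp add: pos_right_eigvec_def less_imp_neq[symmetric])
  finally show ?thesis .
qed

lemma pos_right_eigvec_pos: "pos_right_eigvec M r \<Longrightarrow> r a > 0"
  unfolding pos_right_eigvec_def by blast

lemma spec_radius_pos:
  assumes "pos_right_eigvec M r" "\<And>a b. M a b \<ge> 0" "M a b > 0"
  shows "spec_radius M > 0"
proof -
  note r_pos = pos_right_eigvec_pos[OF assms(1)]
  have "0 < M a b * r b"
    using assms(3) r_pos by simp
  also have "\<dots> \<le> (\<Sum>c\<in>UNIV. M a c * r c)"
    using assms(2) by (intro member_le_sum) (auto intro!: mult_nonneg_nonneg less_imp_le[OF r_pos])
  also have "\<dots> = spec_radius M * r a"
    using assms(1) by (simp add: pos_right_eigvec_def)
  finally show ?thesis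
    using r_pos[of a] by (simp add: zero_less_mult_iff)
qed

section \<open>The functional \<open>\<L>\<^sup>g\<close>\<close>

lemma Lg_cong:
  assumes "i \<le> \<delta>1" "\<delta>1 \<le> i + \<delta>2"
    and "\<And>k. k \<le> i + \<delta>2 \<Longrightarrow> x k = x' k"
    and "\<And>k. k \<le> \<delta>1 \<Longrightarrow> y k = y' k"
    and "\<And>k. i \<le> k \<Longrightarrow> k \<le> i + \<delta>2 \<Longrightarrow> z k = z' k"
  shows "Lg P Q g r0 r1 i \<delta>1 \<delta>2 x y z = Lg P Q g r0 r1 i \<delta>1 \<delta>2 x' y' z'"
proof -
  have "(\<Sum>k\<in>{1..i}. g (x (k-1)) (y (k-1)) (x k) (y k)) = (\<Sum>k\<in>{1..i}. g (x' (k-1)) (y' (k-1)) (x' k) (y' k))"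
    and "(\<Sum>k\<in>{i+1..\<delta>1}. g (x (k-1)) (y (k-1)) (x k) (y k) + g (x (k-1)) (z (k-1)) (x k) (z k))
       = (\<Sum>k\<in>{i+1..\<delta>1}. g (x' (k-1)) (y' (k-1)) (x' k) (y' k) + g (x' (k-1)) (z' (k-1)) (x' k) (z' k))"
    and "(\<Sum>k\<in>{\<delta>1+1..i+\<delta>2}. g (x (k-1)) (z (k-1)) (x k) (z k))
       = (\<Sum>k\<in>{\<delta>1+1..i+\<delta>2}. g (x' (k-1)) (z' (k-1)) (x' k) (z' k))"
    using assms by (auto intro!: sum.cong)
  with assms show ?thesis
    by (simp add: Lg_def Let_def)
qed

definition g_pair :: "'e pot \<Rightarrow> 'e \<times> 'e \<Rightarrow> 'e \<times> 'e \<Rightarrow> real"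
  where "g_pair g = (\<lambda>(x, y) (x', y'). g x y x' y')"

definition g_triple :: "'e pot \<Rightarrow> 'e \<times> 'e \<times> 'e \<Rightarrow> 'e \<times> 'e \<times> 'e \<Rightarrow> real"
  where "g_triple g = (\<lambda>(x, y, z) (x', y', z'). g x y x' y' + g x z x' z')"

definition Lg_factor :: "('e::finite \<Rightarrow> 'e \<Rightarrow> real) \<Rightarrow> ('e \<Rightarrow> 'e \<Rightarrow> real) \<Rightarrow> 'e pot
    \<Rightarrow> ('e \<times> 'e \<Rightarrow> real) \<Rightarrow> ('e \<times> 'e \<times> 'e \<Rightarrow> real) \<Rightarrow> nat \<Rightarrow> nat \<Rightarrow> nat
    \<Rightarrow> 'e \<times> 'e \<times> 'e \<Rightarrow> 'e \<times> 'e \<times> 'e \<Rightarrow> real"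
  where "Lg_factor P Q g r0 r1 i \<delta>1 k = (\<lambda>(x, y, z) (x', y', z').
    if k < i then tilt_factor (g_pair g) r0 (spec_radius (Phi0 P Q g)) (x, y) (x', y')
    else if k < \<delta>1 then tilt_factor (g_triple g) r1 (spec_radius (Phi1 P Q g)) (x, y, z) (x', y', z')
    else tilt_factor (g_pair g) r0 (spec_radius (Phi0 P Q g)) (x, z) (x', z'))"

lemma Lg_eq_prod_Lg_factor:
  assumes "i \<le> \<delta>1" "\<delta>1 \<le> i + \<delta>2" "\<And>a. r0 a \<noteq> 0" "\<And>a. r1 a \<noteq> 0"
  shows "Lg P Q g r0 r1 i \<delta>1 \<delta>2 x y z
           = (\<Prod>k<i + \<delta>2. Lg_factor P Q g r0 r1 i \<delta>1 k (x k, y k, z k) (x (Suc k), y (Suc k), z (Suc k)))"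
proof -
  let ?\<phi>0 = "spec_radius (Phi0 P Q g)" and ?\<phi>1 = "spec_radius (Phi1 P Q g)"
  let ?f = "\<lambda>k. Lg_factor P Q g r0 r1 i \<delta>1 k (x k, y k, z k) (x (Suc k), y (Suc k), z (Suc k))"
  have "(\<Prod>k\<in>{0..<i}. ?f k) = (\<Prod>k\<in>{0..<i}. tilt_factor (g_pair g) r0 ?\<phi>0 (x k, y k) (x (Suc k), y (Suc k)))"
    and "(\<Prod>k\<in>{i..<\<delta>1}. ?f k)
           = (\<Prod>k\<in>{i..<\<delta>1}. tilt_factor (g_triple g) r1 ?\<phi>1 (x k, y k, z k) (x (Suc k), y (Suc k), z (Suc k)))"
    and "(\<Prod>k\<in>{\<delta>1..<i + \<delta>2}. ?f k)
           = (\<Prod>k\<in>{\<delta>1..<i + \<delta>2}. tilt_factor (g_pair g) r0 ?\<phi>0 (x k, z k) (x (Suc k), z (Suc k)))"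
    using assms(1) by (auto simp: Lg_factor_def intro!: prod.cong)
  moreover have "(\<Prod>k<i + \<delta>2. ?f k)
      = (\<Prod>k\<in>{0..<i}. ?f k) * (\<Prod>k\<in>{i..<\<delta>1}. ?f k) * (\<Prod>k\<in>{\<delta>1..<i + \<delta>2}. ?f k)"
    using assms(1,2) by (simp add: atLeast0LessThan[symmetric] prod.atLeastLessThan_concat)
  moreover have "(\<Prod>k\<in>{0..<i}. tilt_factor (g_pair g) r0 ?\<phi>0 (x k, y k) (x (Suc k), y (Suc k)))
      = r0 (x i, y i) * exp (\<Sum>k\<in>{1..i}. g (x (k-1)) (y (k-1)) (x k) (y k)) / (r0 (x 0, y 0) * ?\<phi>0 ^ i)"
    using prod_tilt_factor[of 0 i r0 "\<lambda>k. (x k, y k)"] assms(3) by (simp add: g_pair_def)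
  moreover have "(\<Prod>k\<in>{i..<\<delta>1}. tilt_factor (g_triple g) r1 ?\<phi>1 (x k, y k, z k) (x (Suc k), y (Suc k), z (Suc k)))
      = r1 (x \<delta>1, y \<delta>1, z \<delta>1)
        * exp (\<Sum>k\<in>{i+1..\<delta>1}. g (x (k-1)) (y (k-1)) (x k) (y k) + g (x (k-1)) (z (k-1)) (x k) (z k))
        / (r1 (x i, y i, z i) * ?\<phi>1 ^ (\<delta>1 - i))"
    using prod_tilt_factor[of i \<delta>1 r1 "\<lambda>k. (x k, y k, z k)"] assms(1,4) by (simp add: g_triple_def)
  moreover have "(\<Prod>k\<in>{\<delta>1..<i + \<delta>2}. tilt_factor (g_pair g) r0 ?\<phi>0 (x k, z k) (x (Suc k), z (Suc k)))
      = r0 (x (i + \<delta>2), z (i + \<delta>2)) * exp (\<Sum>k\<in>{\<delta>1+1..i+\<delta>2}. g (x (k-1)) (z (k-1)) (x k) (z k))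
        / (r0 (x \<delta>1, z \<delta>1) * ?\<phi>0 ^ (i + \<delta>2 - \<delta>1))"
    using prod_tilt_factor[of \<delta>1 "i + \<delta>2" r0 "\<lambda>k. (x k, z k)"] assms(2,3) by (simp add: g_pair_def)
  ultimately show ?thesis
    by (simp add: Lg_def Let_def)
qed

lemma Phi0_eq: "Phi0 P Q g a b = exp (g_pair g a b) * pair_kernel P Q a b"
  by (simp add: Phi0_def g_pair_def pair_kernel_def case_prod_beta)

lemma Phi1_eq: "Phi1 P Q g a b = exp (g_triple g a b) * pair_kernel P (pair_kernel Q Q) a b"
  by (simp add: Phi1_def g_triple_def pair_kernel_def case_prod_beta mult_ac)

context
  fixes P Q :: "'e::finite \<Rightarrow> 'e \<Rightarrow> real" and g :: "'e pot"
    and r0 :: "'e \<times> 'e \<Rightarrow> real" and r1 :: "'e \<times> 'e \<times> 'e \<Rightarrow> real"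
  assumes P: "stochastic P" and Q: "stochastic Q"
    and r0: "pos_right_eigvec (Phi0 P Q g) r0" and r1: "pos_right_eigvec (Phi1 P Q g) r1"
begin

lemma spec_radius_Phi0_pos: "spec_radius (Phi0 P Q g) > 0"
proof -
  obtain a b where "P undefined a > 0" "Q undefined b > 0"
    using P Q by (meson stochastic_def sum_eq_1_obtains_pos)
  then show ?thesis
    using P Q by (intro spec_radius_pos[OF r0, of "(undefined, undefined)" "(a, b)"])
      (auto simp: Phi0_def stochastic_def)
qed

lemma spec_radius_Phi1_pos: "spec_radius (Phi1 P Q g) > 0"
proof -
  obtain a b where "P undefined a > 0" "Q undefined b > 0"
    using P Q by (meson stochastic_def sum_eq_1_obtains_pos)
  then show ?thesis
    using P Q by (intro spec_radius_pos[OF r1, of "(undefined, undefined, undefined)" "(a, b, b)"])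
      (auto simp: Phi1_def stochastic_def)
qed

lemma Lg_factor_normalized:
  "(\<Sum>t\<in>UNIV. pair_kernel P (pair_kernel Q Q) s t * Lg_factor P Q g r0 r1 i \<delta>1 k s t) = 1"
proof -
  obtain x y z where s: "s = (x, y, z)"
    by (cases s) auto
  have Q_sum: "(\<Sum>b\<in>UNIV. Q a b) = 1" for a
    using Q by (simp add: stochastic_def)
  have Q_sum_mult: "(\<Sum>b\<in>UNIV. Q a b * c) = c" for a c
    using Q_sum by (simp flip: sum_distrib_right)
  have pair: "(\<Sum>b\<in>UNIV. pair_kernel P Q a b * tilt_factor (g_pair g) r0 (spec_radius (Phi0 P Q g)) a b) = 1" for a
    using spec_radius_Phi0_pos by (intro tilt_factor_normalized[OF r0] Phi0_eq) simp
  have triple: "(\<Sum>b\<in>UNIV. pair_kernel P (pair_kernel Q Q) a b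
                  * tilt_factor (g_triple g) r1 (spec_radius (Phi1 P Q g)) a b) = 1" for a
    using spec_radius_Phi1_pos by (intro tilt_factor_normalized[OF r1] Phi1_eq) simp
  consider "k < i" | "i \<le> k" "k < \<delta>1" | "i \<le> k" "\<delta>1 \<le> k"
    by linarith
  then show ?thesis
  proof cases
    case 1
    then have "(\<Sum>t\<in>UNIV. pair_kernel P (pair_kernel Q Q) s t * Lg_factor P Q g r0 r1 i \<delta>1 k s t)
        = (\<Sum>x'\<in>UNIV. \<Sum>y'\<in>UNIV. \<Sum>z'\<in>UNIV. Q z z' * (pair_kernel P Q (x, y) (x', y')
             * tilt_factor (g_pair g) r0 (spec_radius (Phi0 P Q g)) (x, y) (x', y')))"
      by (simp add: s sum_UNIV_prod Lg_factor_def pair_kernel_def mult_ac)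
    also have "\<dots> = (\<Sum>x'\<in>UNIV. \<Sum>y'\<in>UNIV. pair_kernel P Q (x, y) (x', y')
             * tilt_factor (g_pair g) r0 (spec_radius (Phi0 P Q g)) (x, y) (x', y'))"
      by (simp add: Q_sum_mult)
    finally show ?thesis
      using pair[of "(x, y)"] by (simp add: sum_UNIV_prod)
  next
    case 2
    then show ?thesis
      using triple[of s] by (simp add: s sum_UNIV_prod Lg_factor_def)
  next
    case 3
    then have "(\<Sum>t\<in>UNIV. pair_kernel P (pair_kernel Q Q) s t * Lg_factor P Q g r0 r1 i \<delta>1 k s t)
        = (\<Sum>x'\<in>UNIV. \<Sum>y'\<in>UNIV. \<Sum>z'\<in>UNIV. Q y y' * (pair_kernel P Q (x, z) (x', z')
             * tilt_factor (g_pair g) r0 (spec_radius (Phi0 P Q g)) (x, z) (x', z')))"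
      by (simp add: s sum_UNIV_prod Lg_factor_def pair_kernel_def mult_ac)
    also have "\<dots> = (\<Sum>x'\<in>UNIV. \<Sum>z'\<in>UNIV. pair_kernel P Q (x, z) (x', z')
             * tilt_factor (g_pair g) r0 (spec_radius (Phi0 P Q g)) (x, z) (x', z'))"
      by (rule sum.cong[OF refl], subst sum.swap) (simp add: Q_sum_mult)
    finally show ?thesis
      using pair[of "(x, z)"] by (simp add: sum_UNIV_prod)
  qed
qed

lemma E3_Lg_eq_1:
  fixes \<pi>P \<pi>Q :: "'e \<Rightarrow> real"
  assumes "sum \<pi>P UNIV = 1" "sum \<pi>Q UNIV = 1" "i \<le> \<delta>1" "\<delta>1 \<le> i + \<delta>2"
  shows "E3 \<pi>P P \<pi>Q Q (i + \<delta>2) (Lg P Q g r0 r1 i \<delta>1 \<delta>2) = 1"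
proof -
  let ?n = "i + \<delta>2" and ?L = "Lg P Q g r0 r1 i \<delta>1 \<delta>2"
  let ?K = "pair_kernel P (pair_kernel Q Q)" and ?\<pi> = "pair_dist \<pi>P (pair_dist \<pi>Q \<pi>Q)"
  have L_cong: "?L x y z = ?L x' y' z'"
    if "\<And>k. k \<le> ?n \<Longrightarrow> x k = x' k" "\<And>k. k \<le> ?n \<Longrightarrow> y k = y' k" "\<And>k. k \<le> ?n \<Longrightarrow> z k = z' k"
    for x y z x' y' z'
    using that assms(3,4) by (intro Lg_cong) auto
  have r0_nz: "r0 a \<noteq> 0" and r1_nz: "r1 b \<noteq> 0" for a b
    using pos_right_eigvec_pos[OF r0] pos_right_eigvec_pos[OF r1] by (metis less_irrefl)+
  have inner: "path_expect \<pi>Q Q ?n (\<lambda>y. path_expect \<pi>Q Q ?n (\<lambda>z. ?L x y z))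
      = path_expect (pair_dist \<pi>Q \<pi>Q) (pair_kernel Q Q) ?n (\<lambda>w. ?L x (fst \<circ> w) (snd \<circ> w))" for x
    by (rule path_expect_pair) (auto intro: L_cong)
  have "E3 \<pi>P P \<pi>Q Q ?n ?L
      = path_expect \<pi>P P ?n (\<lambda>x.
          path_expect (pair_dist \<pi>Q \<pi>Q) (pair_kernel Q Q) ?n (\<lambda>w. ?L x (fst \<circ> w) (snd \<circ> w)))"
    by (simp add: E3_eq_path_expect inner)
  also have "\<dots> = path_expect ?\<pi> ?K ?n (\<lambda>s. ?L (fst \<circ> s) (fst \<circ> (snd \<circ> s)) (snd \<circ> (snd \<circ> s)))"
    by (rule path_expect_pair) (auto intro: L_cong)
  also have "\<dots> = path_expect ?\<pi> ?K ?n (\<lambda>s. \<Prod>k<?n. Lg_factor P Q g r0 r1 i \<delta>1 k (s k) (s (Suc k)))"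
    using assms(3,4) r0_nz r1_nz by (simp add: Lg_eq_prod_Lg_factor)
  also have "\<dots> = sum ?\<pi> UNIV"
    by (rule path_expect_prod_unit_mean) (rule Lg_factor_normalized)
  also have "\<dots> = 1"
    using assms(1,2) by (simp add: sum_pair_dist)
  finally show ?thesis .
qed

lemma Lg_pos: "Lg P Q g r0 r1 i \<delta>1 \<delta>2 x y z > 0"
  using pos_right_eigvec_pos[OF r0] pos_right_eigvec_pos[OF r1] spec_radius_Phi0_pos spec_radius_Phi1_pos
  by (simp add: Lg_def Let_def)

lemma path_expect_Lg_shift_le:
  fixes \<pi>Q :: "'e \<Rightarrow> real"
  assumes \<pi>Q: "stationary_dist \<pi>Q Q" and c: "c > 0" "\<And>a. c \<le> \<pi>Q a"
    and "i \<le> \<delta>1" "\<delta>1 \<le> i + \<delta>2" "\<delta>1 < i + T"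
  shows "path_expect \<pi>Q Q (i + \<delta>2 + T) (\<lambda>y. Lg P Q g r0 r1 i \<delta>1 \<delta>2 x y (\<lambda>n. y (n + T)))
           \<le> path_expect \<pi>Q Q (i + \<delta>2) (\<lambda>y.
                path_expect \<pi>Q Q (i + \<delta>2) (\<lambda>z. Lg P Q g r0 r1 i \<delta>1 \<delta>2 x y z)) / c"
proof -
  let ?L = "Lg P Q g r0 r1 i \<delta>1 \<delta>2 x" and ?n = "i + \<delta>2"
  define m where "m = i + T - 1"
  have m: "Suc m = i + T" "\<delta>1 \<le> m" and N: "i + \<delta>2 + T = m + Suc \<delta>2"
    using assms(4-6) by (auto simp: m_def)
  define G where "G = (\<lambda>y. path_expect \<pi>Q Q ?n (\<lambda>z. ?L y z))"
  have G_cong: "G y = G y'" if "\<And>k. k \<le> \<delta>1 \<Longrightarrow> y k = y' k" for y y'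
  proof -
    have "?L y = ?L y'"
      using that assms(4,5) by (intro ext Lg_cong) auto
    then show ?thesis
      by (simp add: G_def)
  qed
  have "path_expect \<pi>Q Q (m + Suc \<delta>2) (\<lambda>y. ?L y (\<lambda>n. y (n + T)))
      \<le> path_expect \<pi>Q Q m (\<lambda>u. path_expect \<pi>Q Q \<delta>2 (\<lambda>w.
           ?L (\<lambda>k. if k \<le> m then u k else w (k - Suc m))
              (\<lambda>n. if n + T \<le> m then u (n + T) else w (n + T - Suc m)))) / c"
    by (rule path_expect_split_le[OF Q c]) (rule less_imp_le[OF Lg_pos])
  also have "(\<lambda>u. path_expect \<pi>Q Q \<delta>2 (\<lambda>w.
           ?L (\<lambda>k. if k \<le> m then u k else w (k - Suc m))
              (\<lambda>n. if n + T \<le> m then u (n + T) else w (n + T - Suc m))))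
      = (\<lambda>u. path_expect \<pi>Q Q \<delta>2 (\<lambda>w. ?L u (\<lambda>n. w (n - i))))"
    using m by (intro ext arg_cong[where f = "path_expect \<pi>Q Q \<delta>2"] Lg_cong assms(4,5)) auto
  also have "(\<lambda>u. path_expect \<pi>Q Q \<delta>2 (\<lambda>w. ?L u (\<lambda>n. w (n - i)))) = G"
  proof
    fix u
    have "?L u (\<lambda>n. z (i + (n - i))) = ?L u z" for z
      using assms(4,5) by (intro Lg_cong) auto
    then show "path_expect \<pi>Q Q \<delta>2 (\<lambda>w. ?L u (\<lambda>n. w (n - i))) = G u"
      using path_expect_shift[OF \<pi>Q, where s = i and n = \<delta>2 and F = "\<lambda>w. ?L u (\<lambda>n. w (n - i))"]
      by (simp add: G_def)
  qed
  also have "path_expect \<pi>Q Q m G = path_expect \<pi>Q Q ?n G"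
    using path_expect_restrict[OF Q m(2) G_cong] path_expect_restrict[OF Q assms(5) G_cong] by simp
  finally show ?thesis
    unfolding N by (simp add: G_def)
qed

lemma E2_Lg_shift_le:
  fixes \<pi>P \<pi>Q :: "'e \<Rightarrow> real"
  assumes \<pi>P: "stationary_dist \<pi>P P" and \<pi>Q: "stationary_dist \<pi>Q Q"
    and c: "c > 0" "\<And>a. c \<le> \<pi>Q a"
    and "i \<le> \<delta>1" "\<delta>1 \<le> i + \<delta>2" "\<delta>1 < i + T"
  shows "E2 \<pi>P P \<pi>Q Q (i + \<delta>2 + T) (\<lambda>x y. Lg P Q g r0 r1 i \<delta>1 \<delta>2 x y (\<lambda>n. y (n + T)))
           \<le> 1 / c"
proof -
  let ?L = "Lg P Q g r0 r1 i \<delta>1 \<delta>2" and ?n = "i + \<delta>2"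
  have \<pi>P_nonneg: "\<pi>P a \<ge> 0" for a
    using \<pi>P by (simp add: stationary_dist_def)
  have L_cong: "?L x y z = ?L x' y z" if "\<And>k. k \<le> ?n \<Longrightarrow> x k = x' k" for x x' y z
    using that assms(5,6) by (intro Lg_cong) auto
  have "E2 \<pi>P P \<pi>Q Q (i + \<delta>2 + T) (\<lambda>x y. ?L x y (\<lambda>n. y (n + T)))
      \<le> path_expect \<pi>P P (i + \<delta>2 + T)
          (\<lambda>x. path_expect \<pi>Q Q ?n (\<lambda>y. path_expect \<pi>Q Q ?n (\<lambda>z. ?L x y z)) / c)"
    unfolding E2_eq_path_expect
    by (intro path_expect_mono[OF P \<pi>P_nonneg] path_expect_Lg_shift_le[OF \<pi>Q c assms(5-7)])
  also have "\<dots> = E3 \<pi>P P \<pi>Q Q ?n ?L / c"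
    unfolding path_expect_divide E3_eq_path_expect
    by (auto intro!: path_expect_restrict[OF P] arg_cong[where f = "path_expect \<pi>Q Q ?n"] L_cong)
  also have "\<dots> = 1 / c"
    using \<pi>P \<pi>Q assms(5,6) by (simp add: E3_Lg_eq_1 stationary_dist_def)
  finally show ?thesis .
qed

end

theorem lemma5p2:
  fixes P Q :: "'e::finite \<Rightarrow> 'e \<Rightarrow> real"
    and \<pi>P \<pi>Q :: "'e \<Rightarrow> real"
    and g :: "'e pot"
    and r0 :: "'e \<times> 'e \<Rightarrow> real"
    and r1 :: "'e \<times> 'e \<times> 'e \<Rightarrow> real"
  assumes "stochastic P" "irreducible_mat P" "aperiodic_mat P"
    and "stochastic Q" "irreducible_mat Q" "aperiodic_mat Q"
    and "stationary_dist \<pi>P P" "stationary_dist \<pi>Q Q"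
    and "pos_right_eigvec (Phi0 P Q g) r0"
    and "pos_right_eigvec (Phi1 P Q g) r1"
  shows "(\<forall>i \<delta>1 \<delta>2. i \<le> \<delta>1 \<and> \<delta>1 - i \<le> \<delta>2 \<longrightarrow>
            E3 \<pi>P P \<pi>Q Q (i + \<delta>2) (Lg P Q g r0 r1 i \<delta>1 \<delta>2) = 1)
       \<and> (\<exists>\<rho>>0. \<forall>i \<delta>1 \<delta>2 T. i \<le> \<delta>1 \<and> \<delta>1 - i \<le> \<delta>2 \<and> T \<ge> 1 \<and> i + T \<ge> \<delta>1 + 1 \<longrightarrow>
            E2 \<pi>P P \<pi>Q Q (i + \<delta>2 + T)
               (\<lambda>x y. Lg P Q g r0 r1 i \<delta>1 \<delta>2 x y (\<lambda>n. y (n + T))) \<le> \<rho>)"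
proof -
  note chains = assms(1,4,9,10)
  define c where "c = Min (range \<pi>Q)"
  have c_pos: "c > 0"
    using stationary_dist_pos[OF assms(8,5,4)] by (simp add: c_def)
  have c_le: "c \<le> \<pi>Q a" for a
    by (simp add: c_def)
  have "E3 \<pi>P P \<pi>Q Q (i + \<delta>2) (Lg P Q g r0 r1 i \<delta>1 \<delta>2) = 1"
    if "i \<le> \<delta>1" "\<delta>1 - i \<le> \<delta>2" for i \<delta>1 \<delta>2
    using assms(7,8) that by (intro E3_Lg_eq_1[OF chains]) (auto simp: stationary_dist_def)
  moreover have
    "E2 \<pi>P P \<pi>Q Q (i + \<delta>2 + T) (\<lambda>x y. Lg P Q g r0 r1 i \<delta>1 \<delta>2 x y (\<lambda>n. y (n + T))) \<le> 1 / c"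
    if "i \<le> \<delta>1" "\<delta>1 - i \<le> \<delta>2" "i + T \<ge> \<delta>1 + 1" for i \<delta>1 \<delta>2 T
    using that by (intro E2_Lg_shift_le[OF chains assms(7,8) c_pos c_le]) auto
  ultimately show ?thesis
    using c_pos by (auto intro!: exI[of _ "1 / c"])
qed

end
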